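(* Let $G,H$ be discrete groups, $\mathcal{A}=(A_g)_{g\in G}$ and $\mathcal{B}=(B_h)_{h\in H}$ Fell bundles, $\varphi\in\mathrm{Hom}(G,H)$, $\rho$ an $(\mathcal{A},\varphi)$-action on a Hilbert $\mathcal{B}$-bundle $\mathcal{X}=(X_h)_{h\in H}$, and $x\in X_e$. Then for each $g\in G$ the map $T_g:A_g\to B_{\varphi(g)}$, $T_g(a)=\langle x,\rho(a)x\rangle_{\mathcal{B}}$, is well-defined, linear and bounded, and $T=(T_g)_{g\in G}$ is a positive definite $\mathcal{A}$-$\varphi$-$\mathcal{B}$ bundle map.
   Context: Groups are discrete, $e$ denotes units. Fell bundles are in the sense of Exel (Banach spaces $A_g$ with bilinear associative products $A_g\times A_h\to A_{gh}$, conjugate-linear involutions $A_g\to A_{g^{-1}}$, $\|ab\|\le\|a\|\|b\|$, $(ab)^*=b^*a^*$, $\|a^*a\|=\|a\|^2$, $a^*a\ge0$ in the $C^*$-algebra $A_e$); $\mathcal{A}$ also denotes the disjoint union of fibres. A Hilbert $\mathcal{B}$-bundle is a family $\mathcal{X}=(X_r)_{r\in H}$ of Banach spaces with maps $(x,b)\mapsto xb$ and $(x,y)\mapsto\langle x,y\rangle_{\mathcal{B}}\in\mathcal{B}$ such that: $X_rB_s\subseteq X_{rs}$ bilinearly; $\langle X_r,X_s\rangle_{\mathcal{B}}\subseteq B_{r^{-1}s}$, linear in the second variable; $\langle x,yb\rangle_{\mathcal{B}}=\langle x,y\rangle_{\mathcal{B}}b$, $\langle x,y\rangle_{\mathcal{B}}^*=\langle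 y,x\rangle_{\mathcal{B}}$; $\langle x,x\rangle_{\mathcal{B}}\ge0$ in $B_e$, zero only for $x=0$; $\|x\|=\|\langle x,x\rangle_{\mathcal{B}}\|^{1/2}$. An $(\mathcal{A},\varphi)$-action on $\mathcal{X}$ is a map $\rho$ from $\mathcal{A}$ to the maps $\mathcal{X}\to\mathcal{X}$ with: $\rho(A_g)X_h\subseteq X_{\varphi(g)h}$, $(a,x)\mapsto\rho(a)x$ bilinear there; $\rho(aa')=\rho(a)\rho(a')$; $\langle\rho(a)x,y\rangle_{\mathcal{B}}=\langle x,\rho(a^* )y\rangle_{\mathcal{B}}$; $(\rho(a)x)b=\rho(a)(xb)$. An $\mathcal{A}$-$\varphi$-$\mathcal{B}$ bundle map is a family of bounded linear maps $T_g:A_g\to B_{\varphi(g)}$; it is positive definite if $\sum_{i,j=1}^nb_iT_{g_i^{-1}g_j}(a_i^*a_j)b_j^*\ge0$ in $B_e$ for all $n$, $g_i\in G$, $a_i\in A_{g_i}$, $b_i\in B_{\varphi(g_i)}$. *)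

theory Defs
  imports "HOL-Analysis.Analysis" "HOL-Algebra.Group"
begin

text \<open>Complex Banach spaces are modelled as complete complex subspaces of an ambient
real normed vector space carrying a compatible complex scalar multiplication sc.
The fibres of a bundle are such subspaces, pairwise intersecting only in 0.\<close>

definition complex_scaling :: "(complex \<Rightarrow> 'a::real_normed_vector \<Rightarrow> 'a) \<Rightarrow> bool" where
  "complex_scaling sc \<longleftrightarrow>
     (\<forall>x. sc 1 x = x) \<and>
     (\<forall>c d x. sc c (sc d x) = sc (c * d) x) \<and>
     (\<forall>c d x. sc (c + d) x = sc c x + sc d x) \<and>
     (\<forall>c x y. sc c (x + y) = sc c x + sc c y) \<and>
     (\<forall>r x. sc (complex_of_real r) x = r *\<^sub>R x) \<and>
     (\<forall>c x. norm (sc c x) = cmod c * norm x)"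

definition csubspace :: "(complex \<Rightarrow> 'a::real_normed_vector \<Rightarrow> 'a) \<Rightarrow> 'a set \<Rightarrow> bool" where
  "csubspace sc S \<longleftrightarrow> 0 \<in> S \<and> (\<forall>x\<in>S. \<forall>y\<in>S. x + y \<in> S) \<and> (\<forall>c. \<forall>x\<in>S. sc c x \<in> S)"

definition banach_fibre :: "(complex \<Rightarrow> 'a::real_normed_vector \<Rightarrow> 'a) \<Rightarrow> 'a set \<Rightarrow> bool" where
  "banach_fibre sc S \<longleftrightarrow> csubspace sc S \<and> complete S"

definition clinear_on ::
  "(complex \<Rightarrow> 'a::real_normed_vector \<Rightarrow> 'a) \<Rightarrow> (complex \<Rightarrow> 'b::real_normed_vector \<Rightarrow> 'b)
    \<Rightarrow> 'a set \<Rightarrow> ('a \<Rightarrow> 'b) \<Rightarrow> bool" where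
  "clinear_on sc1 sc2 S f \<longleftrightarrow>
     (\<forall>x\<in>S. \<forall>y\<in>S. f (x + y) = f x + f y) \<and> (\<forall>c. \<forall>x\<in>S. f (sc1 c x) = sc2 c (f x))"

text \<open>Spectrum in a (possibly non-unital) algebra C, computed in the unitization:
  0 is always in it, and \<lambda> \<noteq> 0 is in it iff a/\<lambda> is not quasi-invertible.\<close>
definition quasi_invertible :: "'a set \<Rightarrow> ('a::real_normed_vector \<Rightarrow> 'a \<Rightarrow> 'a) \<Rightarrow> 'a \<Rightarrow> bool" where
  "quasi_invertible C mul a \<longleftrightarrow> (\<exists>b\<in>C. a + b - mul a b = 0 \<and> a + b - mul b a = 0)"

definition alg_spectrum ::
  "'a set \<Rightarrow> (complex \<Rightarrow> 'a::real_normed_vector \<Rightarrow> 'a) \<Rightarrow> ('a \<Rightarrow> 'a \<Rightarrow> 'a) \<Rightarrow> 'a \<Rightarrow> complex set" where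
  "alg_spectrum C sc mul a = {z. z = 0 \<or> \<not> quasi_invertible C mul (sc (inverse z) a)}"

definition positive_elem ::
  "'a set \<Rightarrow> (complex \<Rightarrow> 'a::real_normed_vector \<Rightarrow> 'a) \<Rightarrow> ('a \<Rightarrow> 'a \<Rightarrow> 'a) \<Rightarrow> ('a \<Rightarrow> 'a) \<Rightarrow> 'a \<Rightarrow> bool" where
  "positive_elem C sc mul star a \<longleftrightarrow>
     a \<in> C \<and> star a = a \<and> alg_spectrum C sc mul a \<subseteq> {complex_of_real r | r. r \<ge> 0}"

definition fell_bundle ::
  "('g, 'gm) monoid_scheme \<Rightarrow> (complex \<Rightarrow> 'a::real_normed_vector \<Rightarrow> 'a) \<Rightarrow> ('g \<Rightarrow> 'a set)
    \<Rightarrow> ('a \<Rightarrow> 'a \<Rightarrow> 'a) \<Rightarrow> ('a \<Rightarrow> 'a) \<Rightarrow> bool" where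
  "fell_bundle G sc A mul star \<longleftrightarrow>
     complex_scaling sc \<and>
     (\<forall>g\<in>carrier G. banach_fibre sc (A g)) \<and>
     (\<forall>g\<in>carrier G. \<forall>h\<in>carrier G. g \<noteq> h \<longrightarrow> A g \<inter> A h = {0}) \<and>
     (\<forall>g\<in>carrier G. \<forall>h\<in>carrier G. \<forall>a\<in>A g. \<forall>b\<in>A h. mul a b \<in> A (g \<otimes>\<^bsub>G\<^esub> h)) \<and>
     (\<forall>g\<in>carrier G. \<forall>h\<in>carrier G. \<forall>a\<in>A g. \<forall>a'\<in>A g. \<forall>b\<in>A h. \<forall>b'\<in>A h. \<forall>c.
        mul (a + a') b = mul a b + mul a' b \<and>
        mul a (b + b') = mul a b + mul a b' \<and>
        mul (sc c a) b = sc c (mul a b) \<and>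
        mul a (sc c b) = sc c (mul a b)) \<and>
     (\<forall>g\<in>carrier G. \<forall>h\<in>carrier G. \<forall>k\<in>carrier G. \<forall>a\<in>A g. \<forall>b\<in>A h. \<forall>c\<in>A k.
        mul (mul a b) c = mul a (mul b c)) \<and>
     (\<forall>g\<in>carrier G. \<forall>a\<in>A g. star a \<in> A (inv\<^bsub>G\<^esub> g) \<and> star (star a) = a) \<and>
     (\<forall>g\<in>carrier G. \<forall>a\<in>A g. \<forall>a'\<in>A g. \<forall>c.
        star (a + a') = star a + star a' \<and> star (sc c a) = sc (cnj c) (star a)) \<and>
     (\<forall>g\<in>carrier G. \<forall>h\<in>carrier G. \<forall>a\<in>A g. \<forall>b\<in>A h.
        norm (mul a b) \<le> norm a * norm b \<and> star (mul a b) = mul (star b) (star a)) \<and>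
     (\<forall>g\<in>carrier G. \<forall>a\<in>A g.
        norm (mul (star a) a) = (norm a)\<^sup>2 \<and>
        positive_elem (A \<one>\<^bsub>G\<^esub>) sc mul star (mul (star a) a))"

definition hilbert_bundle ::
  "('h, 'hm) monoid_scheme \<Rightarrow> (complex \<Rightarrow> 'b::real_normed_vector \<Rightarrow> 'b) \<Rightarrow> ('h \<Rightarrow> 'b set)
    \<Rightarrow> ('b \<Rightarrow> 'b \<Rightarrow> 'b) \<Rightarrow> ('b \<Rightarrow> 'b)
    \<Rightarrow> (complex \<Rightarrow> 'x::real_normed_vector \<Rightarrow> 'x) \<Rightarrow> ('h \<Rightarrow> 'x set)
    \<Rightarrow> ('x \<Rightarrow> 'b \<Rightarrow> 'x) \<Rightarrow> ('x \<Rightarrow> 'x \<Rightarrow> 'b) \<Rightarrow> bool" where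
  "hilbert_bundle H scB B multB starB scX X rmul ip \<longleftrightarrow>
     complex_scaling scX \<and>
     (\<forall>r\<in>carrier H. banach_fibre scX (X r)) \<and>
     (\<forall>r\<in>carrier H. \<forall>s\<in>carrier H. r \<noteq> s \<longrightarrow> X r \<inter> X s = {0}) \<and>
     (\<forall>r\<in>carrier H. \<forall>s\<in>carrier H. \<forall>x\<in>X r. \<forall>b\<in>B s. rmul x b \<in> X (r \<otimes>\<^bsub>H\<^esub> s)) \<and>
     (\<forall>r\<in>carrier H. \<forall>s\<in>carrier H. \<forall>x\<in>X r. \<forall>x'\<in>X r. \<forall>b\<in>B s. \<forall>b'\<in>B s. \<forall>c.
        rmul (x + x') b = rmul x b + rmul x' b \<and>
        rmul x (b + b') = rmul x b + rmul x b' \<and>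
        rmul (scX c x) b = scX c (rmul x b) \<and>
        rmul x (scB c b) = scX c (rmul x b)) \<and>
     (\<forall>r\<in>carrier H. \<forall>s\<in>carrier H. \<forall>x\<in>X r. \<forall>y\<in>X s.
        ip x y \<in> B (inv\<^bsub>H\<^esub> r \<otimes>\<^bsub>H\<^esub> s)) \<and>
     (\<forall>r\<in>carrier H. \<forall>s\<in>carrier H. \<forall>x\<in>X r. \<forall>y\<in>X s. \<forall>y'\<in>X s. \<forall>c.
        ip x (y + y') = ip x y + ip x y' \<and> ip x (scX c y) = scB c (ip x y)) \<and>
     (\<forall>r\<in>carrier H. \<forall>s\<in>carrier H. \<forall>t\<in>carrier H. \<forall>x\<in>X r. \<forall>y\<in>X s. \<forall>b\<in>B t.
        ip x (rmul y b) = multB (ip x y) b) \<and>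
     (\<forall>r\<in>carrier H. \<forall>s\<in>carrier H. \<forall>x\<in>X r. \<forall>y\<in>X s. starB (ip x y) = ip y x) \<and>
     (\<forall>r\<in>carrier H. \<forall>x\<in>X r.
        positive_elem (B \<one>\<^bsub>H\<^esub>) scB multB starB (ip x x) \<and>
        (ip x x = 0 \<longrightarrow> x = 0) \<and>
        norm x = sqrt (norm (ip x x)))"

definition bundle_action ::
  "('g, 'gm) monoid_scheme \<Rightarrow> ('h, 'hm) monoid_scheme \<Rightarrow> ('g \<Rightarrow> 'h)
    \<Rightarrow> (complex \<Rightarrow> 'a::real_normed_vector \<Rightarrow> 'a) \<Rightarrow> ('g \<Rightarrow> 'a set) \<Rightarrow> ('a \<Rightarrow> 'a \<Rightarrow> 'a) \<Rightarrow> ('a \<Rightarrow> 'a)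
    \<Rightarrow> (complex \<Rightarrow> 'x::real_normed_vector \<Rightarrow> 'x) \<Rightarrow> ('h \<Rightarrow> 'x set)
    \<Rightarrow> ('x \<Rightarrow> 'b::real_normed_vector \<Rightarrow> 'x) \<Rightarrow> ('x \<Rightarrow> 'x \<Rightarrow> 'b) \<Rightarrow> ('h \<Rightarrow> 'b set)
    \<Rightarrow> ('a \<Rightarrow> 'x \<Rightarrow> 'x) \<Rightarrow> bool" where
  "bundle_action G H \<phi> scA A multA starA scX X rmul ip B rho \<longleftrightarrow>
     (\<forall>g\<in>carrier G. \<forall>h\<in>carrier H. \<forall>a\<in>A g. \<forall>x\<in>X h. rho a x \<in> X (\<phi> g \<otimes>\<^bsub>H\<^esub> h)) \<and>
     (\<forall>g\<in>carrier G. \<forall>h\<in>carrier H. \<forall>a\<in>A g. \<forall>a'\<in>A g. \<forall>x\<in>X h. \<forall>x'\<in>X h. \<forall>c.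
        rho (a + a') x = rho a x + rho a' x \<and>
        rho a (x + x') = rho a x + rho a x' \<and>
        rho (scA c a) x = scX c (rho a x) \<and>
        rho a (scX c x) = scX c (rho a x)) \<and>
     (\<forall>g\<in>carrier G. \<forall>g'\<in>carrier G. \<forall>a\<in>A g. \<forall>a'\<in>A g'. \<forall>h\<in>carrier H. \<forall>x\<in>X h.
        rho (multA a a') x = rho a (rho a' x)) \<and>
     (\<forall>g\<in>carrier G. \<forall>a\<in>A g. \<forall>r\<in>carrier H. \<forall>s\<in>carrier H. \<forall>x\<in>X r. \<forall>y\<in>X s.
        ip (rho a x) y = ip x (rho (starA a) y)) \<and>
     (\<forall>g\<in>carrier G. \<forall>a\<in>A g. \<forall>r\<in>carrier H. \<forall>s\<in>carrier H. \<forall>x\<in>X r. \<forall>b\<in>B s.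
        rmul (rho a x) b = rho a (rmul x b))"

definition bundle_map ::
  "('g, 'gm) monoid_scheme \<Rightarrow> ('g \<Rightarrow> 'h)
    \<Rightarrow> (complex \<Rightarrow> 'a::real_normed_vector \<Rightarrow> 'a) \<Rightarrow> ('g \<Rightarrow> 'a set)
    \<Rightarrow> (complex \<Rightarrow> 'b::real_normed_vector \<Rightarrow> 'b) \<Rightarrow> ('h \<Rightarrow> 'b set)
    \<Rightarrow> ('g \<Rightarrow> 'a \<Rightarrow> 'b) \<Rightarrow> bool" where
  "bundle_map G \<phi> scA A scB B T \<longleftrightarrow>
     (\<forall>g\<in>carrier G.
        (\<forall>a\<in>A g. T g a \<in> B (\<phi> g)) \<and>
        clinear_on scA scB (A g) (T g) \<and>
        (\<exists>K. \<forall>a\<in>A g. norm (T g a) \<le> K * norm a))"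

definition positive_definite ::
  "('g, 'gm) monoid_scheme \<Rightarrow> ('h, 'hm) monoid_scheme \<Rightarrow> ('g \<Rightarrow> 'h)
    \<Rightarrow> ('g \<Rightarrow> 'a::real_normed_vector set) \<Rightarrow> ('a \<Rightarrow> 'a \<Rightarrow> 'a) \<Rightarrow> ('a \<Rightarrow> 'a)
    \<Rightarrow> (complex \<Rightarrow> 'b::real_normed_vector \<Rightarrow> 'b) \<Rightarrow> ('h \<Rightarrow> 'b set) \<Rightarrow> ('b \<Rightarrow> 'b \<Rightarrow> 'b) \<Rightarrow> ('b \<Rightarrow> 'b)
    \<Rightarrow> ('g \<Rightarrow> 'a \<Rightarrow> 'b) \<Rightarrow> bool" where
  "positive_definite G H \<phi> A multA starA scB B multB starB T \<longleftrightarrow>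
     (\<forall>(n::nat) (gs::nat \<Rightarrow> 'g) as bs.
        (\<forall>i<n. gs i \<in> carrier G \<and> as i \<in> A (gs i) \<and> bs i \<in> B (\<phi> (gs i))) \<longrightarrow>
        positive_elem (B \<one>\<^bsub>H\<^esub>) scB multB starB
          (\<Sum>i<n. \<Sum>j<n. multB (multB (bs i)
               (T (inv\<^bsub>G\<^esub> (gs i) \<otimes>\<^bsub>G\<^esub> gs j) (multA (starA (as i)) (as j)))) (starB (bs j))))"

end

theory Submission
  imports Defs
begin

text \<open>Positive definiteness is the easy half: given g_i, a_i, b_i put
  y = sum_i \<rho>(a_i) x b_i^*; then sum_{i,j} b_i T(a_i^* a_j) b_j^* is the inner product of y
  with itself.

  The real content is boundedness of T_g, since the action is not assumed to be bounded.
  Polarization gives a weak Cauchy-Schwarz inequality |<u, v>| \<le> 4 |u| |v|, first within one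
  fibre and then in general, because for b = <u, v> the C*-identity gives |b|^2 = |<v, u b>|.
  For a self-adjoint h in A_e with |h| \<le> 1/2, Banach's fixed point theorem produces a
  self-adjoint e commuting with h with (1 + e)^2 + h^2 = 1 in the unitization. Then
  1 + e \<plusminus> i h are unitaries, through which \<rho> acts isometrically, and comparing the two
  gives |\<rho>(h) x| \<le> 2 |h| |x|. Finally |\<rho>(a) x|^2 = |<x, \<rho>(a^* a) x>| \<le> 8 |a|^2 |x|^2.\<close>

section \<open>Complex scalings\<close>

definition additive_on :: "'a::ab_group_add set \<Rightarrow> ('a \<Rightarrow> 'b::ab_group_add) \<Rightarrow> bool" where
  "additive_on S f \<longleftrightarrow> (\<forall>x\<in>S. \<forall>y\<in>S. f (x + y) = f x + f y)"

locale complex_scaled =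
  fixes sc :: "complex \<Rightarrow> 'a::real_normed_vector \<Rightarrow> 'a"
  assumes complex_scaling: "complex_scaling sc"
begin

lemma sc_one [simp]: "sc 1 x = x"
  and sc_sc [simp]: "sc c (sc d x) = sc (c * d) x"
  and sc_add_right: "sc c (x + y) = sc c x + sc c y"
  and sc_of_real: "sc (complex_of_real r) x = r *\<^sub>R x"
  and norm_sc: "norm (sc c x) = cmod c * norm x"
  using complex_scaling unfolding complex_scaling_def by blast+

lemma linear_sc: "linear (sc c)"
proof (rule linearI)
  show "sc c (r *\<^sub>R x) = r *\<^sub>R sc c x" for r x
    by (metis sc_of_real sc_sc mult.commute)
qed (rule sc_add_right)

lemma sc_minus_one [simp]: "sc (-1) x = - x"
  using sc_of_real[of "-1" x] by simp

lemma sc_minus_left: "sc (- c) x = - sc c x"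
  by (metis mult_minus1 sc_minus_one sc_sc)

lemma polarization:
  assumes E: "\<And>c. E c = p + sc c q + sc (cnj c) r + sc (cnj c * c) s"
  shows "E 1 - E (-1) + sc (-\<i>) (E \<i> - E (-\<i>)) = 4 *\<^sub>R q"
proof -
  have "E 1 - E (-1) = 2 *\<^sub>R (q + r)"
    unfolding E by (simp add: scaleR_2)
  moreover have "E \<i> - E (-\<i>) = 2 *\<^sub>R (sc \<i> q - sc \<i> r)"
    unfolding E by (simp add: sc_minus_left scaleR_2 algebra_simps)
  moreover have "sc (-\<i>) (2 *\<^sub>R (sc \<i> q - sc \<i> r)) = 2 *\<^sub>R (q - r)"
    by (simp add: linear_cmul[OF linear_sc] linear_diff[OF linear_sc])
  ultimately have "E 1 - E (-1) + sc (-\<i>) (E \<i> - E (-\<i>)) = 2 *\<^sub>R (q + r) + 2 *\<^sub>R (q - r)"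
    by simp
  also have "\<dots> = 4 *\<^sub>R q"
    by (simp add: algebra_simps flip: scaleR_add_left)
  finally show ?thesis .
qed

lemma csubspace_zero: "csubspace sc S \<Longrightarrow> 0 \<in> S"
  and csubspace_add: "csubspace sc S \<Longrightarrow> x \<in> S \<Longrightarrow> y \<in> S \<Longrightarrow> x + y \<in> S"
  and csubspace_sc: "csubspace sc S \<Longrightarrow> x \<in> S \<Longrightarrow> sc c x \<in> S"
  unfolding csubspace_def by blast+

lemma csubspace_scaleR: "csubspace sc S \<Longrightarrow> x \<in> S \<Longrightarrow> r *\<^sub>R x \<in> S"
  using csubspace_sc[of S x "complex_of_real r"] by (simp add: sc_of_real)

lemma csubspace_diff: "csubspace sc S \<Longrightarrow> x \<in> S \<Longrightarrow> y \<in> S \<Longrightarrow> x - y \<in> S"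
  using csubspace_add csubspace_scaleR[of S y "-1"] by fastforce

lemma csubspace_sum:
  assumes "csubspace sc S"
  shows "(\<And>i. i \<in> I \<Longrightarrow> u i \<in> S) \<Longrightarrow> sum u I \<in> S"
  by (induction I rule: infinite_finite_induct)
    (auto intro: csubspace_zero[OF assms] csubspace_add[OF assms])

lemma additive_on_zero:
  assumes "csubspace sc S" "additive_on S f"
  shows "f 0 = 0"
proof -
  have "f (0 + 0) = f 0 + f 0"
    using assms csubspace_zero unfolding additive_on_def by blast
  then show ?thesis by simp
qed

lemma additive_on_diff:
  assumes "csubspace sc S" "additive_on S f" "x \<in> S" "y \<in> S"
  shows "f (x - y) = f x - f y"
proof -
  have "f x = f ((x - y) + y)" by simp
  also have "\<dots> = f (x - y) + f y"
    using assms csubspace_diff unfolding additive_on_def by blast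
  finally show ?thesis by (simp add: algebra_simps)
qed

lemma additive_on_sum:
  assumes "csubspace sc S" "additive_on S f"
  shows "(\<And>i. i \<in> I \<Longrightarrow> u i \<in> S) \<Longrightarrow> f (sum u I) = (\<Sum>i\<in>I. f (u i))"
proof (induction I rule: infinite_finite_induct)
  case (insert i I)
  have "sum u I \<in> S"
    using insert.prems csubspace_sum[OF assms(1)] by blast
  then show ?case
    using insert assms(2) unfolding additive_on_def by simp
qed (simp_all add: additive_on_zero[OF assms])

end

section \<open>Fell bundles\<close>

lemma fell_bundle_complex_scaling: "fell_bundle G sc A mul star \<Longrightarrow> complex_scaling sc"
  unfolding fell_bundle_def by simp

locale fell_bundle_over = complex_scaled sc + group G
  for sc :: "complex \<Rightarrow> 'a::real_normed_vector \<Rightarrow> 'a" and G :: "('g, 'gm) monoid_scheme" (structure) +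
  fixes A :: "'g \<Rightarrow> 'a set" and mul :: "'a \<Rightarrow> 'a \<Rightarrow> 'a" and star :: "'a \<Rightarrow> 'a"
  assumes fell_bundle: "fell_bundle G sc A mul star"
begin

lemma fibre_csubspace: "g \<in> carrier G \<Longrightarrow> csubspace sc (A g)"
  and fibre_complete: "g \<in> carrier G \<Longrightarrow> complete (A g)"
  using fell_bundle unfolding fell_bundle_def banach_fibre_def by auto

lemma mul_closed:
  "g \<in> carrier G \<Longrightarrow> h \<in> carrier G \<Longrightarrow> a \<in> A g \<Longrightarrow> b \<in> A h \<Longrightarrow> mul a b \<in> A (g \<otimes> h)"
  using fell_bundle unfolding fell_bundle_def by auto

lemma mul_bilinear:
  assumes "g \<in> carrier G" "h \<in> carrier G" "a \<in> A g" "a' \<in> A g" "b \<in> A h" "b' \<in> A h"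
  shows "mul (a + a') b = mul a b + mul a' b" and "mul a (b + b') = mul a b + mul a b'"
    and "mul (sc c a) b = sc c (mul a b)" and "mul a (sc c b) = sc c (mul a b)"
  using fell_bundle assms unfolding fell_bundle_def by simp_all

lemma mul_add_left:
  "g \<in> carrier G \<Longrightarrow> h \<in> carrier G \<Longrightarrow> a \<in> A g \<Longrightarrow> a' \<in> A g \<Longrightarrow> b \<in> A h \<Longrightarrow>
    mul (a + a') b = mul a b + mul a' b"
  by (rule mul_bilinear(1))

lemma mul_add_right:
  "g \<in> carrier G \<Longrightarrow> h \<in> carrier G \<Longrightarrow> a \<in> A g \<Longrightarrow> b \<in> A h \<Longrightarrow> b' \<in> A h \<Longrightarrow>
    mul a (b + b') = mul a b + mul a b'"
  by (rule mul_bilinear(2))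

lemma mul_sc_left:
  "g \<in> carrier G \<Longrightarrow> h \<in> carrier G \<Longrightarrow> a \<in> A g \<Longrightarrow> b \<in> A h \<Longrightarrow> mul (sc c a) b = sc c (mul a b)"
  by (rule mul_bilinear(3))

lemma mul_sc_right:
  "g \<in> carrier G \<Longrightarrow> h \<in> carrier G \<Longrightarrow> a \<in> A g \<Longrightarrow> b \<in> A h \<Longrightarrow> mul a (sc c b) = sc c (mul a b)"
  by (rule mul_bilinear(4))

lemma mul_assoc:
  "g \<in> carrier G \<Longrightarrow> h \<in> carrier G \<Longrightarrow> k \<in> carrier G \<Longrightarrow> a \<in> A g \<Longrightarrow> b \<in> A h \<Longrightarrow> c \<in> A k \<Longrightarrow>
    mul (mul a b) c = mul a (mul b c)"
  using fell_bundle unfolding fell_bundle_def by auto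

lemma star_closed: "g \<in> carrier G \<Longrightarrow> a \<in> A g \<Longrightarrow> star a \<in> A (inv g)"
  and star_star: "g \<in> carrier G \<Longrightarrow> a \<in> A g \<Longrightarrow> star (star a) = a"
  and star_add: "g \<in> carrier G \<Longrightarrow> a \<in> A g \<Longrightarrow> a' \<in> A g \<Longrightarrow> star (a + a') = star a + star a'"
  and star_sc: "g \<in> carrier G \<Longrightarrow> a \<in> A g \<Longrightarrow> star (sc c a) = sc (cnj c) (star a)"
  using fell_bundle unfolding fell_bundle_def by auto

lemma norm_mul_le:
  "g \<in> carrier G \<Longrightarrow> h \<in> carrier G \<Longrightarrow> a \<in> A g \<Longrightarrow> b \<in> A h \<Longrightarrow> norm (mul a b) \<le> norm a * norm b"
  and star_mul:
  "g \<in> carrier G \<Longrightarrow> h \<in> carrier G \<Longrightarrow> a \<in> A g \<Longrightarrow> b \<in> A h \<Longrightarrow> star (mul a b) = mul (star b) (star a)"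
  using fell_bundle unfolding fell_bundle_def by auto

lemma norm_star_mul_self: "g \<in> carrier G \<Longrightarrow> a \<in> A g \<Longrightarrow> norm (mul (star a) a) = (norm a)\<^sup>2"
  using fell_bundle unfolding fell_bundle_def by auto


lemma additive_on_mul_left:
  "g \<in> carrier G \<Longrightarrow> h \<in> carrier G \<Longrightarrow> b \<in> A h \<Longrightarrow> additive_on (A g) (\<lambda>a. mul a b)"
  unfolding additive_on_def by (simp add: mul_add_left)

lemma additive_on_mul_right:
  "g \<in> carrier G \<Longrightarrow> h \<in> carrier G \<Longrightarrow> a \<in> A g \<Longrightarrow> additive_on (A h) (mul a)"
  unfolding additive_on_def by (simp add: mul_add_right)

lemma mul_diff_left:
  assumes "g \<in> carrier G" "h \<in> carrier G" "a \<in> A g" "a' \<in> A g" "b \<in> A h"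
  shows "mul (a - a') b = mul a b - mul a' b"
  using additive_on_diff[OF fibre_csubspace additive_on_mul_left, of g h b a a'] assms by simp

lemma mul_diff_right:
  assumes "g \<in> carrier G" "h \<in> carrier G" "a \<in> A g" "b \<in> A h" "b' \<in> A h"
  shows "mul a (b - b') = mul a b - mul a b'"
  using additive_on_diff[OF fibre_csubspace additive_on_mul_right, of h g a b b'] assms by simp

lemma mul_zero_left: "g \<in> carrier G \<Longrightarrow> h \<in> carrier G \<Longrightarrow> b \<in> A h \<Longrightarrow> mul 0 b = 0"
  using additive_on_zero[OF fibre_csubspace additive_on_mul_left, of g h b] by simp

lemma mul_zero_right: "g \<in> carrier G \<Longrightarrow> h \<in> carrier G \<Longrightarrow> a \<in> A g \<Longrightarrow> mul a 0 = 0"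
  using additive_on_zero[OF fibre_csubspace additive_on_mul_right, of h g a] by simp

lemma mul_scaleR_left:
  "g \<in> carrier G \<Longrightarrow> h \<in> carrier G \<Longrightarrow> a \<in> A g \<Longrightarrow> b \<in> A h \<Longrightarrow> mul (r *\<^sub>R a) b = r *\<^sub>R mul a b"
  using mul_sc_left[of g h a b "complex_of_real r"] by (simp add: sc_of_real)

lemma mul_scaleR_right:
  "g \<in> carrier G \<Longrightarrow> h \<in> carrier G \<Longrightarrow> a \<in> A g \<Longrightarrow> b \<in> A h \<Longrightarrow> mul a (r *\<^sub>R b) = r *\<^sub>R mul a b"
  using mul_sc_right[of g h a b "complex_of_real r"] by (simp add: sc_of_real)

lemma star_scaleR: "g \<in> carrier G \<Longrightarrow> a \<in> A g \<Longrightarrow> star (r *\<^sub>R a) = r *\<^sub>R star a"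
  using star_sc[of g a "complex_of_real r"] by (simp add: sc_of_real)

lemma norm_star: assumes "g \<in> carrier G" "a \<in> A g" shows "norm (star a) = norm a"
proof -
  have le: "norm b \<le> norm (star b)" if "k \<in> carrier G" "b \<in> A k" for k b
  proof -
    have "(norm b)\<^sup>2 \<le> norm (star b) * norm b"
      using norm_star_mul_self[OF that]
        norm_mul_le[OF inv_closed[OF that(1)] that(1) star_closed[OF that] that(2)]
      by simp
    then show ?thesis
      by (cases "norm b = 0") (auto simp: power2_eq_square)
  qed
  show ?thesis
    using le[OF assms] le[OF inv_closed[OF assms(1)] star_closed[OF assms]] star_star[OF assms]
    by simp
qed

lemma unit_fibre_mul_closed: "a \<in> A \<one> \<Longrightarrow> b \<in> A \<one> \<Longrightarrow> mul a b \<in> A \<one>"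
  using mul_closed[of \<one> \<one> a b] by simp

lemma unit_fibre_star_closed: "a \<in> A \<one> \<Longrightarrow> star a \<in> A \<one>"
  using star_closed[of \<one> a] by simp

lemma norm_mul_self_diff_le:
  assumes x: "x \<in> A \<one>" and y: "y \<in> A \<one>"
  shows "norm (mul x x - mul y y) \<le> (norm x + norm y) * norm (x - y)"
proof -
  have one: "\<one> \<in> carrier G" by simp
  have xy: "x - y \<in> A \<one>" using csubspace_diff[OF fibre_csubspace[OF one] x y] .
  have "mul x x - mul y y = mul x (x - y) + mul (x - y) y"
    using mul_diff_right[OF one one x x y] mul_diff_left[OF one one x y y] by simp
  also have "norm \<dots> \<le> norm x * norm (x - y) + norm (x - y) * norm y"
    by (intro norm_triangle_le add_mono norm_mul_le[OF one one x xy] norm_mul_le[OF one one xy y])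
  finally show ?thesis by (simp add: algebra_simps)
qed

lemma commute_limit:
  assumes f: "f \<longlonglongrightarrow> l" "\<And>n. f n \<in> A \<one>" "\<And>n. mul (f n) h = mul h (f n)"
    and l: "l \<in> A \<one>" and h: "h \<in> A \<one>"
  shows "mul l h = mul h l"
proof -
  have one: "\<one> \<in> carrier G" by simp
  have "norm (mul l h - mul h l) \<le> 2 * norm h * norm (f n - l)" for n
  proof -
    have d: "f n - l \<in> A \<one>" using csubspace_diff[OF fibre_csubspace[OF one] f(2) l] .
    have "mul l h - mul h l = mul h (f n - l) - mul (f n - l) h"
      using mul_diff_left[OF one one f(2) l h] mul_diff_right[OF one one h f(2) l] f(3)[of n]
      by (simp add: algebra_simps)
    also have "norm \<dots> \<le> norm h * norm (f n - l) + norm (f n - l) * norm h"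
      by (intro order_trans[OF norm_triangle_ineq4] add_mono
          norm_mul_le[OF one one h d] norm_mul_le[OF one one d h])
    finally show ?thesis by simp
  qed
  moreover have "(\<lambda>n. 2 * norm h * norm (f n - l)) \<longlonglongrightarrow> 0"
    using f(1) by (intro tendsto_mult_right_zero) (simp add: LIM_zero tendsto_norm_zero)
  ultimately have "norm (mul l h - mul h l) \<le> 0"
    by (intro LIMSEQ_le_const) auto
  then show ?thesis by simp
qed


lemma commutant_ball_complete:
  assumes h: "h \<in> A \<one>"
  shows "complete {e \<in> A \<one>. norm e \<le> R \<and> mul e h = mul h e}"
proof (rule completeI)
  fix f assume f: "\<forall>n. f n \<in> {e \<in> A \<one>. norm e \<le> R \<and> mul e h = mul h e}" "Cauchy f"
  then have fA: "\<forall>n. f n \<in> A \<one>" by auto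
  obtain l where l: "l \<in> A \<one>" "f \<longlonglongrightarrow> l"
    using completeE[OF fibre_complete[OF one_closed] fA f(2)] by blast
  have "norm l \<le> R"
    using f(1) by (intro LIMSEQ_le_const2[OF tendsto_norm[OF l(2)]]) auto
  moreover have "mul l h = mul h l"
    using f(1) by (intro commute_limit[OF l(2) _ _ l(1) h]) auto
  ultimately show "\<exists>l\<in>{e \<in> A \<one>. norm e \<le> R \<and> mul e h = mul h e}. f \<longlonglongrightarrow> l"
    using l by auto
qed

lemma sqrt_iteration_commute:
  assumes h: "h \<in> A \<one>" and e: "e \<in> A \<one>" "mul e h = mul h e"
  shows "mul ((-1/2) *\<^sub>R (mul h h + mul e e)) h = mul h ((-1/2) *\<^sub>R (mul h h + mul e e))"
proof -
  have one: "\<one> \<in> carrier G" by simp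
  have square_commute: "mul (mul a a) h = mul h (mul a a)" if "a \<in> A \<one>" "mul a h = mul h a" for a
    using mul_assoc[OF one one one that(1) that(1) h] mul_assoc[OF one one one that(1) h that(1)]
      mul_assoc[OF one one one h that(1) that(1)] that(2)
    by simp
  have hh: "mul h h \<in> A \<one>" and ee: "mul e e \<in> A \<one>"
    using unit_fibre_mul_closed h e(1) by auto
  have sum: "mul h h + mul e e \<in> A \<one>" using csubspace_add[OF fibre_csubspace[OF one] hh ee] .
  have "mul ((-1/2) *\<^sub>R (mul h h + mul e e)) h = (-1/2) *\<^sub>R (mul (mul h h) h + mul (mul e e) h)"
    using mul_scaleR_left[OF one one sum h] mul_add_left[OF one one hh ee h] by (simp only:)
  also have "\<dots> = (-1/2) *\<^sub>R (mul h (mul h h) + mul h (mul e e))"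
    using square_commute[OF e] square_commute[OF h refl] by simp
  also have "\<dots> = mul h ((-1/2) *\<^sub>R (mul h h + mul e e))"
    using mul_scaleR_right[OF one one h sum] mul_add_right[OF one one h hh ee] by (simp only:)
  finally show ?thesis .
qed

text \<open>In the unitization the equation below reads (1 + e)^2 + h^2 = 1, so e is sqrt (1 - h^2) - 1;
  it is the fixed point of the contraction e \<mapsto> -(h^2 + e^2)/2 on a ball of the commutant of h.\<close>

lemma sqrt_one_minus_square_unique:
  assumes h: "h \<in> A \<one>" and h_small: "norm h \<le> 1/2"
  shows "\<exists>!e. (e \<in> A \<one> \<and> norm e \<le> 1/2 \<and> mul e h = mul h e) \<and> (-1/2) *\<^sub>R (mul h h + mul e e) = e"
proof -
  have one: "\<one> \<in> carrier G" by simp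
  note A1 = fibre_csubspace[OF one]
  define S where "S = {e \<in> A \<one>. norm e \<le> 1/2 \<and> mul e h = mul h e}"
  define F where "F e = (-1/2) *\<^sub>R (mul h h + mul e e)" for e
  have square_le: "norm (mul e e) \<le> 1/4" if "e \<in> A \<one>" "norm e \<le> 1/2" for e
  proof -
    have "norm (mul e e) \<le> norm e * norm e" using norm_mul_le[OF one one that(1) that(1)] .
    also have "\<dots> \<le> 1/2 * (1/2)" using that(2) by (intro mult_mono) auto
    finally show ?thesis by simp
  qed
  have "F ` S \<subseteq> S"
  proof
    fix y assume "y \<in> F ` S"
    then obtain e where e: "e \<in> A \<one>" "norm e \<le> 1/2" "mul e h = mul h e" and y: "y = F e"
      unfolding S_def by blast
    have "F e \<in> A \<one>"
      unfolding F_def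
      using csubspace_scaleR[OF A1 csubspace_add[OF A1]] unit_fibre_mul_closed h e(1) by blast
    moreover have "norm (F e) \<le> 1/2 * (norm (mul h h) + norm (mul e e))"
      unfolding F_def using norm_triangle_ineq[of "mul h h" "mul e e"] by simp
    moreover have "\<dots> \<le> 1/2" using square_le[OF h h_small] square_le[OF e(1,2)] by simp
    ultimately show "y \<in> S"
      unfolding S_def using y sqrt_iteration_commute[OF h e(1,3)] by (simp add: F_def)
  qed
  moreover have "dist (F x) (F y) \<le> 1/2 * dist x y" if "x \<in> S" "y \<in> S" for x y
  proof -
    have x: "x \<in> A \<one>" "norm x \<le> 1/2" and y: "y \<in> A \<one>" "norm y \<le> 1/2"
      using that unfolding S_def by auto
    have "F x - F y = (-1/2) *\<^sub>R (mul x x - mul y y)"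
      unfolding F_def by (simp add: algebra_simps)
    then have "dist (F x) (F y) = 1/2 * norm (mul x x - mul y y)"
      by (simp add: dist_norm)
    also have "\<dots> \<le> 1/2 * ((norm x + norm y) * norm (x - y))"
      using norm_mul_self_diff_le[OF x(1) y(1)] by simp
    also have "\<dots> \<le> 1/2 * (1 * norm (x - y))"
      using x(2) y(2) by (intro mult_left_mono mult_right_mono) auto
    finally show ?thesis by (simp add: dist_norm)
  qed
  moreover have "0 \<in> S"
    unfolding S_def
    using csubspace_zero[OF A1] mul_zero_left[OF one one h] mul_zero_right[OF one one h] by simp
  moreover have "complete S"
    unfolding S_def by (rule commutant_ball_complete[OF h])
  ultimately have "\<exists>!e\<in>S. F e = e"
    by (intro Banach_fix[of S "1/2"]) auto
  then show ?thesis unfolding S_def F_def by simp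
qed

lemma sqrt_one_minus_square_exists:
  assumes h: "h \<in> A \<one>" and h_sa: "star h = h" and h_small: "norm h \<le> 1/2"
  shows "\<exists>e\<in>A \<one>. star e = e \<and> mul e h = mul h e \<and> e = (-1/2) *\<^sub>R (mul h h + mul e e)"
proof -
  have one: "\<one> \<in> carrier G" by simp
  obtain e where e: "e \<in> A \<one>" "norm e \<le> 1/2" "mul e h = mul h e"
      "(-1/2) *\<^sub>R (mul h h + mul e e) = e"
    and unique: "\<And>e'. (e' \<in> A \<one> \<and> norm e' \<le> 1/2 \<and> mul e' h = mul h e') \<and>
      (-1/2) *\<^sub>R (mul h h + mul e' e') = e' \<Longrightarrow> e' = e"
    using sqrt_one_minus_square_unique[OF h h_small] by blast
  have hh: "mul h h \<in> A \<one>" and ee: "mul e e \<in> A \<one>"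
    using unit_fibre_mul_closed h e(1) by auto
  have "star e = e"
  proof (rule unique, intro conjI)
    show "star e \<in> A \<one>" using unit_fibre_star_closed[OF e(1)] .
    show "norm (star e) \<le> 1/2" using norm_star[OF one e(1)] e(2) by simp
    have "mul (star e) h = star (mul h e)" using star_mul[OF one one h e(1)] h_sa by simp
    also have "\<dots> = mul h (star e)" using star_mul[OF one one e(1) h] h_sa e(3) by simp
    finally show "mul (star e) h = mul h (star e)" .
    have "star e = (-1/2) *\<^sub>R (star (mul h h) + star (mul e e))"
      using star_scaleR[OF one csubspace_add[OF fibre_csubspace[OF one] hh ee]]
        star_add[OF one hh ee] e(4)
      by metis
    also have "\<dots> = (-1/2) *\<^sub>R (mul h h + mul (star e) (star e))"
      using star_mul[OF one one h h] star_mul[OF one one e(1) e(1)] h_sa by simp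
    finally show "(-1/2) *\<^sub>R (mul h h + mul (star e) (star e)) = star e" ..
  qed
  then show ?thesis using e(1,3) e(4)[symmetric] by blast
qed

text \<open>For d = e + c h with c = \<plusminus>i this says (1 + d)^* (1 + d) = (1 + e)^2 + h^2 = 1
  in the unitization.\<close>

lemma quasi_unitary_of_sqrt:
  assumes h: "h \<in> A \<one>" "star h = h"
    and e: "e \<in> A \<one>" "star e = e" "mul e h = mul h e" "e = (-1/2) *\<^sub>R (mul h h + mul e e)"
    and c: "c \<in> {\<i>, -\<i>}"
  shows "(e + sc c h) + star (e + sc c h) + mul (star (e + sc c h)) (e + sc c h) = 0"
proof -
  have one: "\<one> \<in> carrier G" by simp
  note A1 = fibre_csubspace[OF one]
  define s where "s = sc c h"
  have s: "s \<in> A \<one>" unfolding s_def using csubspace_sc[OF A1 h(1)] .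
  have "cnj c = - c" "c * c = -1" using c by auto
  then have star_s: "star s = - s"
    unfolding s_def using star_sc[OF one h(1)] h(2) by (simp add: sc_minus_left)
  have es: "mul e s = mul s e"
    unfolding s_def using mul_sc_right[OF one one e(1) h(1)] mul_sc_left[OF one one h(1) e(1)] e(3)
    by simp
  have ss: "mul s s = - mul h h"
  proof -
    have "mul s s = sc c (mul (sc c h) h)"
      unfolding s_def using mul_sc_right[OF one one s[unfolded s_def] h(1)] .
    also have "\<dots> = - mul h h"
      using mul_sc_left[OF one one h(1) h(1)] \<open>c * c = -1\<close> by simp
    finally show ?thesis .
  qed
  have "star (e + s) = e - s" using star_add[OF one e(1) s] e(2) star_s by simp
  moreover have "mul (e - s) (e + s) = mul e e + mul h h"
    using mul_diff_left[OF one one e(1) s csubspace_add[OF A1 e(1) s]]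
      mul_add_right[OF one one e(1) e(1) s] mul_add_right[OF one one s e(1) s] es ss
    by simp
  ultimately have "(e + s) + star (e + s) + mul (star (e + s)) (e + s) =
      (e + e) + (mul e e + mul h h)"
    by (simp only:) (simp add: algebra_simps)
  also have "e + e = - (mul h h + mul e e)"
  proof -
    have "2 *\<^sub>R e = 2 *\<^sub>R ((-1/2) *\<^sub>R (mul h h + mul e e))"
      by (subst e(4)[symmetric]) (rule refl)
    then show ?thesis by (simp add: scaleR_2)
  qed
  finally show ?thesis unfolding s_def by simp
qed

end

section \<open>Hilbert bundles\<close>

lemma hilbert_bundle_complex_scaling:
  "hilbert_bundle H scB B multB starB scX X rmul ip \<Longrightarrow> complex_scaling scX"
  unfolding hilbert_bundle_def by simp

locale hilbert_bundle_over = B: fell_bundle_over scB H B multB starB + X: complex_scaled scX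
  for scB :: "complex \<Rightarrow> 'b::real_normed_vector \<Rightarrow> 'b" and H :: "('h, 'hm) monoid_scheme" (structure)
    and B :: "'h \<Rightarrow> 'b set" and multB :: "'b \<Rightarrow> 'b \<Rightarrow> 'b" and starB :: "'b \<Rightarrow> 'b"
    and scX :: "complex \<Rightarrow> 'x::real_normed_vector \<Rightarrow> 'x" +
  fixes X :: "'h \<Rightarrow> 'x set" and rmul :: "'x \<Rightarrow> 'b \<Rightarrow> 'x" and ip :: "'x \<Rightarrow> 'x \<Rightarrow> 'b"
  assumes hilbert_bundle: "hilbert_bundle H scB B multB starB scX X rmul ip"
begin

lemma X_fibre_csubspace: "r \<in> carrier H \<Longrightarrow> csubspace scX (X r)"
  using hilbert_bundle unfolding hilbert_bundle_def banach_fibre_def by auto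

lemma rmul_closed:
  "r \<in> carrier H \<Longrightarrow> s \<in> carrier H \<Longrightarrow> x \<in> X r \<Longrightarrow> b \<in> B s \<Longrightarrow> rmul x b \<in> X (r \<otimes> s)"
  using hilbert_bundle unfolding hilbert_bundle_def by auto

lemma ip_closed:
  "r \<in> carrier H \<Longrightarrow> s \<in> carrier H \<Longrightarrow> x \<in> X r \<Longrightarrow> y \<in> X s \<Longrightarrow> ip x y \<in> B (inv r \<otimes> s)"
  using hilbert_bundle unfolding hilbert_bundle_def by auto

lemma ip_add_right:
  "r \<in> carrier H \<Longrightarrow> s \<in> carrier H \<Longrightarrow> x \<in> X r \<Longrightarrow> y \<in> X s \<Longrightarrow> y' \<in> X s \<Longrightarrow>
    ip x (y + y') = ip x y + ip x y'"
  and ip_sc_right: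
  "r \<in> carrier H \<Longrightarrow> s \<in> carrier H \<Longrightarrow> x \<in> X r \<Longrightarrow> y \<in> X s \<Longrightarrow> ip x (scX c y) = scB c (ip x y)"
  using hilbert_bundle unfolding hilbert_bundle_def by simp_all

lemma ip_rmul_right:
  "r \<in> carrier H \<Longrightarrow> s \<in> carrier H \<Longrightarrow> t \<in> carrier H \<Longrightarrow> x \<in> X r \<Longrightarrow> y \<in> X s \<Longrightarrow> b \<in> B t \<Longrightarrow>
    ip x (rmul y b) = multB (ip x y) b"
  using hilbert_bundle unfolding hilbert_bundle_def by simp

lemma star_ip: "r \<in> carrier H \<Longrightarrow> s \<in> carrier H \<Longrightarrow> x \<in> X r \<Longrightarrow> y \<in> X s \<Longrightarrow> starB (ip x y) = ip y x"
  using hilbert_bundle unfolding hilbert_bundle_def by simp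

lemma ip_self_positive: "r \<in> carrier H \<Longrightarrow> x \<in> X r \<Longrightarrow> positive_elem (B \<one>) scB multB starB (ip x x)"
  and norm_sq_eq_norm_ip: "r \<in> carrier H \<Longrightarrow> x \<in> X r \<Longrightarrow> (norm x)\<^sup>2 = norm (ip x x)"
  using hilbert_bundle unfolding hilbert_bundle_def by simp_all

context
  fixes r s assumes r: "r \<in> carrier H" and s: "s \<in> carrier H"
begin

lemma additive_on_ip_right: "x \<in> X r \<Longrightarrow> additive_on (X s) (ip x)"
  unfolding additive_on_def using r s by (simp add: ip_add_right)

lemma ip_add_left:
  assumes x: "x \<in> X r" "x' \<in> X r" and y: "y \<in> X s"
  shows "ip (x + x') y = ip x y + ip x' y"
proof -
  have "ip (x + x') y = starB (ip y (x + x'))"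
    using star_ip[OF s r y X.csubspace_add[OF X_fibre_csubspace[OF r] x]] by simp
  also have "\<dots> = starB (ip y x) + starB (ip y x')"
    using ip_add_right[OF s r y x] r s
      B.star_add[OF _ ip_closed[OF s r y x(1)] ip_closed[OF s r y x(2)]]
    by simp
  also have "\<dots> = ip x y + ip x' y"
    using star_ip[OF s r y] x by simp
  finally show ?thesis .
qed

lemma additive_on_ip_left: "y \<in> X s \<Longrightarrow> additive_on (X r) (\<lambda>x. ip x y)"
  unfolding additive_on_def by (simp add: ip_add_left)

lemma ip_sc_left:
  assumes x: "x \<in> X r" and y: "y \<in> X s"
  shows "ip (scX c x) y = scB (cnj c) (ip x y)"
proof -
  have "ip (scX c x) y = starB (scB c (ip y x))"
    using star_ip[OF s r y X.csubspace_sc[OF X_fibre_csubspace[OF r] x]] ip_sc_right[OF s r y x]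
    by simp
  also have "\<dots> = scB (cnj c) (ip x y)"
    using B.star_sc[OF _ ip_closed[OF s r y x]] star_ip[OF s r y x] r s by simp
  finally show ?thesis .
qed

lemma ip_zero_left: "y \<in> X s \<Longrightarrow> ip 0 y = 0"
  using X.additive_on_zero[OF X_fibre_csubspace[OF r] additive_on_ip_left] by simp

lemma ip_zero_right: "x \<in> X r \<Longrightarrow> ip x 0 = 0"
  using X.additive_on_zero[OF X_fibre_csubspace[OF s] additive_on_ip_right] by simp

lemma ip_scaleR_left: "x \<in> X r \<Longrightarrow> y \<in> X s \<Longrightarrow> ip (t *\<^sub>R x) y = t *\<^sub>R ip x y"
  using ip_sc_left[of x y "complex_of_real t"] by (simp add: X.sc_of_real B.sc_of_real)

lemma ip_scaleR_right: "x \<in> X r \<Longrightarrow> y \<in> X s \<Longrightarrow> ip x (t *\<^sub>R y) = t *\<^sub>R ip x y"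
  using ip_sc_right[OF r s, of x y "complex_of_real t"] by (simp add: X.sc_of_real B.sc_of_real)

lemma ip_sum_left:
  assumes "\<And>i. i \<in> I \<Longrightarrow> u i \<in> X r" and "y \<in> X s"
  shows "ip (sum u I) y = (\<Sum>i\<in>I. ip (u i) y)"
  using X.additive_on_sum[OF X_fibre_csubspace[OF r] additive_on_ip_left[OF assms(2)] assms(1)]
  by simp

lemma ip_sum_right:
  assumes "x \<in> X r" and "\<And>i. i \<in> I \<Longrightarrow> u i \<in> X s"
  shows "ip x (sum u I) = (\<Sum>i\<in>I. ip x (u i))"
  using X.additive_on_sum[OF X_fibre_csubspace[OF s] additive_on_ip_right[OF assms(1)] assms(2)]
  by simp

end

lemma ip_rmul_left:
  assumes r: "r \<in> carrier H" and s: "s \<in> carrier H" and t: "t \<in> carrier H"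
    and x: "x \<in> X r" and y: "y \<in> X s" and b: "b \<in> B t"
  shows "ip (rmul x b) y = multB (starB b) (ip x y)"
proof -
  have "ip (rmul x b) y = starB (multB (ip y x) b)"
    using star_ip[OF s _ y rmul_closed[OF r t x b]] ip_rmul_right[OF s r t y x b] r t by simp
  also have "\<dots> = multB (starB b) (ip x y)"
    using B.star_mul[OF _ t ip_closed[OF s r y x] b] star_ip[OF s r y x] r s by simp
  finally show ?thesis .
qed

lemma ip_add_sc_self:
  assumes r: "r \<in> carrier H" and u: "u \<in> X r" and v: "v \<in> X r"
  shows "ip (u + scX c v) (u + scX c v) =
    ip u u + scB c (ip u v) + scB (cnj c) (ip v u) + scB (cnj c * c) (ip v v)"
proof -
  have w: "scX c v \<in> X r" using X.csubspace_sc[OF X_fibre_csubspace[OF r] v] .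
  have "ip (u + scX c v) (u + scX c v) = ip u (u + scX c v) + ip (scX c v) (u + scX c v)"
    using ip_add_left[OF r r u w] X.csubspace_add[OF X_fibre_csubspace[OF r] u w] by simp
  also have "\<dots> = ip u u + ip u (scX c v) + (ip (scX c v) u + ip (scX c v) (scX c v))"
    using ip_add_right[OF r r u u w] ip_add_right[OF r r w u w] by simp
  also have "\<dots> = ip u u + scB c (ip u v) + scB (cnj c) (ip v u) + scB (cnj c * c) (ip v v)"
    using ip_sc_right[OF r r u v] ip_sc_left[OF r r v u]
      ip_sc_left[OF r r v w] ip_sc_right[OF r r v v]
    by (simp add: add.assoc)
  finally show ?thesis .
qed

lemma norm_ip_le_sq_norm_add:
  assumes r: "r \<in> carrier H" and u: "u \<in> X r" and v: "v \<in> X r"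
  shows "norm (ip u v) \<le> (norm u + norm v)\<^sup>2"
proof -
  note Xr = X_fibre_csubspace[OF r]
  define E where "E c = ip (u + scX c v) (u + scX c v)" for c
  have E_le: "norm (E c) \<le> (norm u + norm v)\<^sup>2" if "cmod c = 1" for c
  proof -
    have "u + scX c v \<in> X r"
      using X.csubspace_add[OF Xr u X.csubspace_sc[OF Xr v]] .
    then have "norm (E c) = (norm (u + scX c v))\<^sup>2"
      unfolding E_def using norm_sq_eq_norm_ip[OF r] by simp
    also have "\<dots> \<le> (norm u + norm v)\<^sup>2"
      using norm_triangle_ineq[of u "scX c v"] X.norm_sc[of c v] that by (intro power_mono) simp_all
    finally show ?thesis .
  qed
  have polar: "4 *\<^sub>R ip u v = E 1 - E (-1) + scB (-\<i>) (E \<i> - E (-\<i>))"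
    by (rule B.polarization[symmetric]) (simp add: E_def ip_add_sc_self[OF r u v])
  have "4 * norm (ip u v) = norm (E 1 - E (-1) + scB (-\<i>) (E \<i> - E (-\<i>)))"
    using arg_cong[OF polar, of norm] by simp
  also have "\<dots> \<le> norm (E 1 - E (-1)) + norm (scB (-\<i>) (E \<i> - E (-\<i>)))"
    by (rule norm_triangle_ineq)
  also have "\<dots> = norm (E 1 - E (-1)) + norm (E \<i> - E (-\<i>))"
    by (simp add: B.norm_sc)
  also have "\<dots> \<le> norm (E 1) + norm (E (-1)) + (norm (E \<i>) + norm (E (-\<i>)))"
    by (intro add_mono norm_triangle_ineq4)
  also have "\<dots> \<le> 4 * (norm u + norm v)\<^sup>2"
    using E_le[of 1] E_le[of "-1"] E_le[of \<i>] E_le[of "-\<i>"] by simp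
  finally show ?thesis by simp
qed

lemma norm_ip_same_fibre_le:
  assumes r: "r \<in> carrier H" and u: "u \<in> X r" and v: "v \<in> X r"
  shows "norm (ip u v) \<le> 4 * norm u * norm v"
proof (cases "u = 0 \<or> v = 0")
  case True
  then show ?thesis using ip_zero_left[OF r r] ip_zero_right[OF r r] u v by auto
next
  case False
  then have u_pos: "norm u > 0" and v_pos: "norm v > 0" by auto
  define t where "t = sqrt (norm v / norm u)"
  have t_pos: "t > 0" using u_pos v_pos t_def by simp
  have "t * norm u = sqrt (norm v / norm u) * sqrt ((norm u)\<^sup>2)"
    unfolding t_def by simp
  also have "\<dots> = sqrt (norm v / norm u * (norm u)\<^sup>2)"
    by (simp only: real_sqrt_mult)
  also have "\<dots> = sqrt (norm u * norm v)"
    using u_pos by (simp add: power2_eq_square)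
  finally have norm_u': "t * norm u = sqrt (norm u * norm v)" .
  have "t\<^sup>2 = norm v / norm u"
    unfolding t_def using u_pos v_pos by simp
  then have "norm v / t = t * norm u"
    using t_pos u_pos by (simp add: field_simps power2_eq_square)
  then have norm_v': "norm v / t = sqrt (norm u * norm v)"
    using norm_u' by simp
  have u': "t *\<^sub>R u \<in> X r" and v': "(1/t) *\<^sub>R v \<in> X r"
    using X.csubspace_scaleR[OF X_fibre_csubspace[OF r]] u v by blast+
  have "ip u v = ip (t *\<^sub>R u) ((1/t) *\<^sub>R v)"
    using ip_scaleR_left[OF r r u v'] ip_scaleR_right[OF r r u v] t_pos by simp
  also have "norm \<dots> \<le> (norm (t *\<^sub>R u) + norm ((1/t) *\<^sub>R v))\<^sup>2"
    using norm_ip_le_sq_norm_add[OF r u' v'] .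
  also have "\<dots> = (2 * sqrt (norm u * norm v))\<^sup>2"
    using norm_u' norm_v' t_pos by simp
  also have "\<dots> = 4 * norm u * norm v"
    by (simp add: power_mult_distrib)
  finally show ?thesis .
qed

lemma norm_rmul_le:
  assumes r: "r \<in> carrier H" and t: "t \<in> carrier H" and x: "x \<in> X r" and b: "b \<in> B t"
  shows "norm (rmul x b) \<le> norm x * norm b"
proof -
  have xx: "ip x x \<in> B (inv r \<otimes> r)" using ip_closed[OF r r x x] .
  have b': "starB b \<in> B (inv t)" using B.star_closed[OF t b] .
  have b'xx: "multB (starB b) (ip x x) \<in> B (inv t \<otimes> (inv r \<otimes> r))"
    using B.mul_closed[OF _ _ b' xx] r t by simp
  have "(norm (rmul x b))\<^sup>2 = norm (multB (multB (starB b) (ip x x)) b)"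
    using norm_sq_eq_norm_ip[OF _ rmul_closed[OF r t x b]] ip_rmul_left[OF r r t x x b] r t
      ip_rmul_right[OF _ r t rmul_closed[OF r t x b] x b]
    by simp
  also have "\<dots> \<le> norm (multB (starB b) (ip x x)) * norm b"
    using B.norm_mul_le[OF _ t b'xx b] r t by simp
  also have "\<dots> \<le> norm (starB b) * norm (ip x x) * norm b"
    using B.norm_mul_le[OF _ _ b' xx] r t by (simp add: mult_right_mono)
  also have "\<dots> = (norm x * norm b)\<^sup>2"
    using B.norm_star[OF t b] norm_sq_eq_norm_ip[OF r x] by (simp add: power2_eq_square)
  finally show ?thesis by (rule power2_le_imp_le) simp
qed

lemma norm_ip_le:
  assumes r: "r \<in> carrier H" and s: "s \<in> carrier H" and x: "x \<in> X r" and y: "y \<in> X s"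
  shows "norm (ip x y) \<le> 4 * norm x * norm y"
proof -
  define b where "b = ip x y"
  define k where "k = inv r \<otimes> s"
  have k: "k \<in> carrier H" using r s k_def by simp
  have b: "b \<in> B k" using ip_closed[OF r s x y] b_def k_def by simp
  have xb: "rmul x b \<in> X s"
    using rmul_closed[OF r k x b] r s k_def by (simp add: B.m_assoc[symmetric])
  have "(norm b)\<^sup>2 = norm (ip y (rmul x b))"
    using B.norm_star_mul_self[OF k b] ip_rmul_right[OF s r k y x b] star_ip[OF r s x y] b_def
    by simp
  also have "\<dots> \<le> 4 * norm y * norm (rmul x b)"
    using norm_ip_same_fibre_le[OF s y xb] .
  also have "\<dots> \<le> 4 * norm y * (norm x * norm b)"
    using norm_rmul_le[OF r k x b] by (simp add: mult_left_mono)
  finally have "norm b * norm b \<le> (4 * norm x * norm y) * norm b"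
    by (simp add: power2_eq_square algebra_simps)
  then show ?thesis
    unfolding b_def by (cases "norm (ip x y) = 0") auto
qed

end

section \<open>Actions of Fell bundles on Hilbert bundles\<close>

locale fell_bundle_action =
  A: fell_bundle_over scA G A multA starA + hilbert_bundle_over scB H B multB starB scX X rmul ip
  for scA :: "complex \<Rightarrow> 'a::real_normed_vector \<Rightarrow> 'a" and G :: "('g, 'gm) monoid_scheme" (structure)
    and A :: "'g \<Rightarrow> 'a set" and multA :: "'a \<Rightarrow> 'a \<Rightarrow> 'a" and starA :: "'a \<Rightarrow> 'a"
    and scB :: "complex \<Rightarrow> 'b::real_normed_vector \<Rightarrow> 'b"
    and H :: "('h, 'hm) monoid_scheme" (structure)
    and B :: "'h \<Rightarrow> 'b set" and multB :: "'b \<Rightarrow> 'b \<Rightarrow> 'b" and starB :: "'b \<Rightarrow> 'b"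
    and scX :: "complex \<Rightarrow> 'x::real_normed_vector \<Rightarrow> 'x" and X :: "'h \<Rightarrow> 'x set"
    and rmul :: "'x \<Rightarrow> 'b \<Rightarrow> 'x" and ip :: "'x \<Rightarrow> 'x \<Rightarrow> 'b" +
  fixes \<phi> :: "'g \<Rightarrow> 'h" and rho :: "'a \<Rightarrow> 'x \<Rightarrow> 'x"
  assumes hom: "\<phi> \<in> hom G H"
    and action: "bundle_action G H \<phi> scA A multA starA scX X rmul ip B rho"

sublocale fell_bundle_action \<subseteq> \<phi>: group_hom G H \<phi>
  by unfold_locales (rule hom)

context fell_bundle_action
begin

lemma rho_closed:
  "g \<in> carrier G \<Longrightarrow> r \<in> carrier H \<Longrightarrow> a \<in> A g \<Longrightarrow> x \<in> X r \<Longrightarrow> rho a x \<in> X (\<phi> g \<otimes>\<^bsub>H\<^esub> r)"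
  using action unfolding bundle_action_def by auto

lemma rho_linear:
  assumes "g \<in> carrier G" "r \<in> carrier H" "a \<in> A g" "a' \<in> A g" "x \<in> X r" "x' \<in> X r"
  shows "rho (a + a') x = rho a x + rho a' x" and "rho (scA c a) x = scX c (rho a x)"
  using action assms unfolding bundle_action_def by simp_all

lemma rho_add_left:
  "g \<in> carrier G \<Longrightarrow> r \<in> carrier H \<Longrightarrow> a \<in> A g \<Longrightarrow> a' \<in> A g \<Longrightarrow> x \<in> X r \<Longrightarrow>
    rho (a + a') x = rho a x + rho a' x"
  by (rule rho_linear(1))

lemma rho_sc_left:
  "g \<in> carrier G \<Longrightarrow> r \<in> carrier H \<Longrightarrow> a \<in> A g \<Longrightarrow> x \<in> X r \<Longrightarrow> rho (scA c a) x = scX c (rho a x)"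
  by (rule rho_linear(2))

lemma rho_mul:
  "g \<in> carrier G \<Longrightarrow> g' \<in> carrier G \<Longrightarrow> a \<in> A g \<Longrightarrow> a' \<in> A g' \<Longrightarrow> r \<in> carrier H \<Longrightarrow> x \<in> X r \<Longrightarrow>
    rho (multA a a') x = rho a (rho a' x)"
  using action unfolding bundle_action_def by simp

lemma ip_rho_left:
  "g \<in> carrier G \<Longrightarrow> a \<in> A g \<Longrightarrow> r \<in> carrier H \<Longrightarrow> s \<in> carrier H \<Longrightarrow> x \<in> X r \<Longrightarrow> y \<in> X s \<Longrightarrow>
    ip (rho a x) y = ip x (rho (starA a) y)"
  using action unfolding bundle_action_def by simp

lemma additive_on_rho_left:
  "g \<in> carrier G \<Longrightarrow> r \<in> carrier H \<Longrightarrow> x \<in> X r \<Longrightarrow> additive_on (A g) (\<lambda>a. rho a x)"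
  unfolding additive_on_def by (simp add: rho_add_left)

lemma rho_zero_left: "g \<in> carrier G \<Longrightarrow> r \<in> carrier H \<Longrightarrow> x \<in> X r \<Longrightarrow> rho 0 x = 0"
  using A.additive_on_zero[OF A.fibre_csubspace additive_on_rho_left, of g r x] by simp

lemma rho_scaleR_left:
  "g \<in> carrier G \<Longrightarrow> r \<in> carrier H \<Longrightarrow> a \<in> A g \<Longrightarrow> x \<in> X r \<Longrightarrow> rho (t *\<^sub>R a) x = t *\<^sub>R rho a x"
  using rho_sc_left[of g r a x "complex_of_real t"] by (simp add: A.sc_of_real X.sc_of_real)

lemma norm_add_rho_quasi_unitary:
  assumes d: "d \<in> A \<one>\<^bsub>G\<^esub>" and quasi_unitary: "d + starA d + multA (starA d) d = 0"
    and r: "r \<in> carrier H" and x: "x \<in> X r"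
  shows "norm (x + rho d x) = norm x"
proof -
  have one: "\<one>\<^bsub>G\<^esub> \<in> carrier G" by simp
  note Xr = X_fibre_csubspace[OF r]
  have rho_1: "rho a z \<in> X r" if "a \<in> A \<one>\<^bsub>G\<^esub>" "z \<in> X r" for a z
    using rho_closed[OF one r that] r by simp
  have d': "starA d \<in> A \<one>\<^bsub>G\<^esub>" using A.unit_fibre_star_closed[OF d] .
  have d'd: "multA (starA d) d \<in> A \<one>\<^bsub>G\<^esub>" using A.unit_fibre_mul_closed[OF d' d] .
  define y where "y = rho d x"
  have y: "y \<in> X r" unfolding y_def using rho_1[OF d x] .
  have "ip (x + y) (x + y) = ip x x + (ip x y + ip y x + ip y y)"
    using ip_add_left[OF r r x y] ip_add_right[OF r r x x y] ip_add_right[OF r r y x y]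
      X.csubspace_add[OF Xr x y]
    by (simp add: algebra_simps)
  also have "ip x y + ip y x + ip y y = ip x (rho (d + starA d + multA (starA d) d) x)"
  proof -
    have "ip y x = ip x (rho (starA d) x)" unfolding y_def using ip_rho_left[OF one d r r x x] .
    moreover have "ip y y = ip x (rho (multA (starA d) d) x)"
      unfolding y_def
      using ip_rho_left[OF one d r r x y[unfolded y_def]] rho_mul[OF one one d' d r x] by simp
    moreover have "rho (d + starA d + multA (starA d) d) x =
        y + rho (starA d) x + rho (multA (starA d) d) x"
      unfolding y_def
      using rho_add_left[OF one r A.csubspace_add[OF A.fibre_csubspace[OF one] d d'] d'd x]
        rho_add_left[OF one r d d' x] by simp
    ultimately show ?thesis
      using ip_add_right[OF r r x] y rho_1[OF d' x] rho_1[OF d'd x] X.csubspace_add[OF Xr]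
      by simp
  qed
  also have "\<dots> = 0"
    using quasi_unitary rho_zero_left[OF one r x] ip_zero_right[OF r r x] by simp
  finally have "ip (x + y) (x + y) = ip x x" by simp
  then have "(norm (x + y))\<^sup>2 = (norm x)\<^sup>2"
    using norm_sq_eq_norm_ip[OF r x] norm_sq_eq_norm_ip[OF r X.csubspace_add[OF Xr x y]]
    by simp
  then show ?thesis
    unfolding y_def by (rule power2_eq_imp_eq) simp_all
qed

lemma norm_rho_self_adjoint_le_norm:
  assumes h: "h \<in> A \<one>\<^bsub>G\<^esub>" "starA h = h" "norm h \<le> 1/2"
    and r: "r \<in> carrier H" and x: "x \<in> X r"
  shows "norm (rho h x) \<le> norm x"
proof -
  have one: "\<one>\<^bsub>G\<^esub> \<in> carrier G" by simp
  note A1 = A.fibre_csubspace[OF one]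
  obtain e where e: "e \<in> A \<one>\<^bsub>G\<^esub>" "starA e = e" "multA e h = multA h e"
      "e = (-1/2) *\<^sub>R (multA h h + multA e e)"
    using A.sqrt_one_minus_square_exists[OF h] by blast
  define u where "u c = e + scA c h" for c
  have u: "u c \<in> A \<one>\<^bsub>G\<^esub>" for c
    unfolding u_def using A.csubspace_add[OF A1 e(1) A.csubspace_sc[OF A1 h(1)]] .
  have isometric: "norm (x + rho (u c) x) = norm x" if "c \<in> {\<i>, -\<i>}" for c
    using A.quasi_unitary_of_sqrt[OF h(1,2) e that, folded u_def]
    by (rule norm_add_rho_quasi_unitary[OF u _ r x])
  have "rho (u \<i>) x - rho (u (-\<i>)) x = rho (scA \<i> h) x - rho (scA (-\<i>) h) x"
    unfolding u_def
    using rho_add_left[OF one r e(1) A.csubspace_sc[OF A1 h(1)] x] by simp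
  also have "\<dots> = 2 *\<^sub>R scX \<i> (rho h x)"
    using rho_sc_left[OF one r h(1) x] by (simp add: X.sc_minus_left scaleR_2)
  finally have "2 * norm (rho h x) = norm ((x + rho (u \<i>) x) - (x + rho (u (-\<i>)) x))"
    by (simp add: X.norm_sc)
  also have "\<dots> \<le> norm (x + rho (u \<i>) x) + norm (x + rho (u (-\<i>)) x)"
    by (rule norm_triangle_ineq4)
  also have "\<dots> = norm x + norm x"
    using isometric by simp
  finally show ?thesis by simp
qed

lemma norm_rho_self_adjoint_le:
  assumes h: "h \<in> A \<one>\<^bsub>G\<^esub>" "starA h = h" and r: "r \<in> carrier H" and x: "x \<in> X r"
  shows "norm (rho h x) \<le> 2 * norm h * norm x"
proof (cases "h = 0")
  case True
  then show ?thesis using rho_zero_left[OF _ r x, of "\<one>\<^bsub>G\<^esub>"] by simp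
next
  case False
  have one: "\<one>\<^bsub>G\<^esub> \<in> carrier G" by simp
  define t where "t = 1 / (2 * norm h)"
  have t: "t > 0" using False t_def by simp
  have "t * norm (rho h x) = norm (rho (t *\<^sub>R h) x)"
    using rho_scaleR_left[OF one r h(1) x] t by simp
  also have "\<dots> \<le> norm x"
  proof (rule norm_rho_self_adjoint_le_norm[OF _ _ _ r x])
    show "t *\<^sub>R h \<in> A \<one>\<^bsub>G\<^esub>" using A.csubspace_scaleR[OF A.fibre_csubspace[OF one] h(1)] .
    show "starA (t *\<^sub>R h) = t *\<^sub>R h" using A.star_scaleR[OF one h(1)] h(2) by simp
    show "norm (t *\<^sub>R h) \<le> 1/2" using t False unfolding t_def by simp
  qed
  finally show ?thesis using t False unfolding t_def by (simp add: field_simps)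
qed

lemma norm_rho_le:
  assumes g: "g \<in> carrier G" and a: "a \<in> A g" and r: "r \<in> carrier H" and x: "x \<in> X r"
  shows "norm (rho a x) \<le> 3 * norm a * norm x"
proof -
  have g': "inv\<^bsub>G\<^esub> g \<in> carrier G" using g by simp
  have a': "starA a \<in> A (inv\<^bsub>G\<^esub> g)" using A.star_closed[OF g a] .
  define h where "h = multA (starA a) a"
  have h: "h \<in> A \<one>\<^bsub>G\<^esub>" unfolding h_def using A.mul_closed[OF g' g a' a] g by simp
  have h_sa: "starA h = h"
    unfolding h_def using A.star_mul[OF g' g a' a] A.star_star[OF g a] by simp
  have gr: "\<phi> g \<otimes>\<^bsub>H\<^esub> r \<in> carrier H" using g r by simp
  have ax: "rho a x \<in> X (\<phi> g \<otimes>\<^bsub>H\<^esub> r)" using rho_closed[OF g r a x] .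
  have "(norm (rho a x))\<^sup>2 = norm (ip x (rho h x))"
    using norm_sq_eq_norm_ip[OF gr ax] ip_rho_left[OF g a r gr x ax] rho_mul[OF g' g a' a r x]
    unfolding h_def by simp
  also have "\<dots> \<le> 4 * norm x * norm (rho h x)"
    using norm_ip_same_fibre_le[OF r x] rho_closed[OF _ r h x] r by simp
  also have "\<dots> \<le> 4 * norm x * (2 * norm h * norm x)"
    by (intro mult_left_mono norm_rho_self_adjoint_le[OF h h_sa r x]) simp
  also have "\<dots> \<le> (3 * norm a * norm x)\<^sup>2"
    using A.norm_star_mul_self[OF g a] unfolding h_def
    by (simp add: power2_eq_square mult_right_mono)
  finally show ?thesis by (rule power2_le_imp_le) simp
qed

lemma bundle_map_ip_rho:
  assumes x: "x \<in> X \<one>\<^bsub>H\<^esub>"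
  shows "bundle_map G \<phi> scA A scB B (\<lambda>g a. ip x (rho a x))"
  unfolding bundle_map_def clinear_on_def
proof (intro ballI conjI allI)
  fix g assume g: "g \<in> carrier G"
  have one: "\<one>\<^bsub>H\<^esub> \<in> carrier H" by simp
  have ax: "rho a x \<in> X (\<phi> g)" if "a \<in> A g" for a
    using rho_closed[OF g one that x] g by simp
  show "ip x (rho a x) \<in> B (\<phi> g)" if "a \<in> A g" for a
    using ip_closed[OF one _ x ax[OF that]] g by simp
  show "ip x (rho (a + a') x) = ip x (rho a x) + ip x (rho a' x)" if "a \<in> A g" "a' \<in> A g" for a a'
    using rho_add_left[OF g one that x] ip_add_right[OF one _ x ax[OF that(1)] ax[OF that(2)]] g
    by simp
  show "ip x (rho (scA c a) x) = scB c (ip x (rho a x))" if "a \<in> A g" for c a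
    using rho_sc_left[OF g one that x] ip_sc_right[OF one _ x ax[OF that]] g by simp
  have "norm (ip x (rho a x)) \<le> (12 * norm x * norm x) * norm a" if "a \<in> A g" for a
  proof -
    have "norm (ip x (rho a x)) \<le> 4 * norm x * norm (rho a x)"
      using norm_ip_le[OF one _ x ax[OF that]] g by simp
    also have "\<dots> \<le> 4 * norm x * (3 * norm a * norm x)"
      by (intro mult_left_mono norm_rho_le[OF g that one x]) simp
    finally show ?thesis by (simp add: algebra_simps)
  qed
  then show "\<exists>K. \<forall>a\<in>A g. norm (ip x (rho a x)) \<le> K * norm a" by blast
qed

lemma ip_rmul_rho:
  assumes g: "g \<in> carrier G" "g' \<in> carrier G" and a: "a \<in> A g" "a' \<in> A g'"
    and b: "b \<in> B (\<phi> g)" "b' \<in> B (\<phi> g')" and x: "x \<in> X \<one>\<^bsub>H\<^esub>"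
  shows "ip (rmul (rho a x) (starB b)) (rmul (rho a' x) (starB b')) =
    multB (multB b (ip x (rho (multA (starA a) a') x))) (starB b')"
proof -
  have one: "\<one>\<^bsub>H\<^esub> \<in> carrier H" by simp
  have ax: "rho a x \<in> X (\<phi> g)" and a'x: "rho a' x \<in> X (\<phi> g')"
    using rho_closed[OF _ one _ x] g a by simp_all
  have b': "starB b \<in> B (inv\<^bsub>H\<^esub> \<phi> g)" and b'': "starB b' \<in> B (inv\<^bsub>H\<^esub> \<phi> g')"
    using B.star_closed b g by simp_all
  have "ip (rmul (rho a x) (starB b)) (rmul (rho a' x) (starB b')) =
      multB (multB (starB (starB b)) (ip (rho a x) (rho a' x))) (starB b')"
    using ip_rmul_right[OF one _ _ _ a'x b''] ip_rmul_left[OF _ _ _ ax a'x b']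
      rmul_closed[OF _ _ ax b'] g
    by simp
  also have "ip (rho a x) (rho a' x) = ip x (rho (multA (starA a) a') x)"
    using ip_rho_left[OF g(1) a(1) one _ x a'x] g
      rho_mul[OF _ g(2) A.star_closed[OF g(1) a(1)] a(2) one x]
    by simp
  finally show ?thesis using B.star_star[OF _ b(1)] g by simp
qed

lemma positive_definite_ip_rho:
  assumes x: "x \<in> X \<one>\<^bsub>H\<^esub>"
  shows "positive_definite G H \<phi> A multA starA scB B multB starB (\<lambda>g a. ip x (rho a x))"
  unfolding positive_definite_def
proof (intro allI impI)
  fix n :: nat and gs :: "nat \<Rightarrow> 'g" and as bs
  assume hyp: "\<forall>i<n. gs i \<in> carrier G \<and> as i \<in> A (gs i) \<and> bs i \<in> B (\<phi> (gs i))"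
  have one: "\<one>\<^bsub>H\<^esub> \<in> carrier H" by simp
  define y where "y i = rmul (rho (as i) x) (starB (bs i))" for i
  have y: "y i \<in> X \<one>\<^bsub>H\<^esub>" if "i < n" for i
  proof -
    have i: "gs i \<in> carrier G" "as i \<in> A (gs i)" "bs i \<in> B (\<phi> (gs i))" using hyp that by auto
    show ?thesis
      unfolding y_def
      using rmul_closed[OF _ _ rho_closed[OF i(1) one i(2) x] B.star_closed[OF _ i(3)]] i(1) by simp
  qed
  have Y: "(\<Sum>i<n. y i) \<in> X \<one>\<^bsub>H\<^esub>"
    by (rule X.csubspace_sum[OF X_fibre_csubspace[OF one]]) (simp add: y)
  have "ip (\<Sum>i<n. y i) (\<Sum>j<n. y j) = (\<Sum>i<n. ip (y i) (\<Sum>j<n. y j))"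
    by (rule ip_sum_left[OF one one]) (simp_all add: y Y)
  also have "\<dots> = (\<Sum>i<n. \<Sum>j<n. ip (y i) (y j))"
    by (intro sum.cong refl ip_sum_right[OF one one]) (simp_all add: y)
  also have "\<dots> = (\<Sum>i<n. \<Sum>j<n.
      multB (multB (bs i) (ip x (rho (multA (starA (as i)) (as j)) x))) (starB (bs j)))"
  proof (intro sum.cong refl)
    fix i j assume "i \<in> {..<n}" "j \<in> {..<n}"
    then have "gs i \<in> carrier G" "gs j \<in> carrier G" "as i \<in> A (gs i)" "as j \<in> A (gs j)"
      "bs i \<in> B (\<phi> (gs i))" "bs j \<in> B (\<phi> (gs j))"
      using hyp by auto
    then show "ip (y i) (y j) =
        multB (multB (bs i) (ip x (rho (multA (starA (as i)) (as j)) x))) (starB (bs j))"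
      unfolding y_def by (rule ip_rmul_rho[OF _ _ _ _ _ _ x])
  qed
  finally show "positive_elem (B \<one>\<^bsub>H\<^esub>) scB multB starB (\<Sum>i<n. \<Sum>j<n.
      multB (multB (bs i) (ip x (rho (multA (starA (as i)) (as j)) x))) (starB (bs j)))"
    using ip_self_positive[OF one Y] by simp
qed

end

theorem proposition5p3:
  fixes G :: "('g, 'gm) monoid_scheme" and H :: "('h, 'hm) monoid_scheme"
    and \<phi> :: "'g \<Rightarrow> 'h"
    and scA :: "complex \<Rightarrow> 'a::real_normed_vector \<Rightarrow> 'a" and A :: "'g \<Rightarrow> 'a set"
    and multA :: "'a \<Rightarrow> 'a \<Rightarrow> 'a" and starA :: "'a \<Rightarrow> 'a"
    and scB :: "complex \<Rightarrow> 'b::real_normed_vector \<Rightarrow> 'b" and B :: "'h \<Rightarrow> 'b set"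
    and multB :: "'b \<Rightarrow> 'b \<Rightarrow> 'b" and starB :: "'b \<Rightarrow> 'b"
    and scX :: "complex \<Rightarrow> 'x::real_normed_vector \<Rightarrow> 'x" and X :: "'h \<Rightarrow> 'x set"
    and rmul :: "'x \<Rightarrow> 'b \<Rightarrow> 'x" and ip :: "'x \<Rightarrow> 'x \<Rightarrow> 'b"
    and rho :: "'a \<Rightarrow> 'x \<Rightarrow> 'x" and x :: 'x
  assumes "group G" and "group H"
    and "fell_bundle G scA A multA starA"
    and "fell_bundle H scB B multB starB"
    and "\<phi> \<in> hom G H"
    and "hilbert_bundle H scB B multB starB scX X rmul ip"
    and "bundle_action G H \<phi> scA A multA starA scX X rmul ip B rho"
    and "x \<in> X \<one>\<^bsub>H\<^esub>"
  shows "bundle_map G \<phi> scA A scB B (\<lambda>g a. ip x (rho a x))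
       \<and> positive_definite G H \<phi> A multA starA scB B multB starB (\<lambda>g a. ip x (rho a x))"
proof -
  interpret fell_bundle_action scA G A multA starA scB H B multB starB scX X rmul ip \<phi> rho
    using assms fell_bundle_complex_scaling[OF assms(3)] fell_bundle_complex_scaling[OF assms(4)]
      hilbert_bundle_complex_scaling[OF assms(6)]
    by (intro fell_bundle_action.intro hilbert_bundle_over.intro fell_bundle_over.intro
        complex_scaled.intro fell_bundle_action_axioms.intro hilbert_bundle_over_axioms.intro
        fell_bundle_over_axioms.intro) blast+
  show ?thesis
    using bundle_map_ip_rho positive_definite_ip_rho assms(8) by blast
qed

end
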